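(* In the setting described in the context, there is a constant $M_2>0$, independent of $\epsilon\in(0,1)$, such that for all $x\in\mathbb{R}$ and all $t\geq0$, $$|v^\epsilon(x,t)|\leq \frac{M_2}{\epsilon^\alpha},\qquad \Big|\frac{\partial}{\partial x}v^\epsilon(x,t)\Big|\leq \frac{M_2}{\epsilon^{2\alpha}}.$$
   Context: Let $\mathcal{C}_b(\mathbb{R})$ denote the Banach space of bounded continuous real functions on $\mathbb{R}$ with the sup norm. For a real function $u$ set $u^+=\max(0,u)$, $u^-=\max(0,-u)$. For $0<\epsilon<1$ let $u^\epsilon:\mathbb{R}\times[0,\infty)\to\mathbb{R}$ be $2\pi$-periodic in $x$, with $t\mapsto u^\epsilon(\cdot,t)$ continuous from $[0,\infty)$ into $\mathcal{C}_b(\mathbb{R})$, and assume there is $M_1>0$ with $|u^\epsilon(x,t)|\leq M_1$ for all $\epsilon,x,t\ge0$. Let $v_0^\epsilon\in\mathcal{C}_b(\mathbb{R})$ be $2\pi$-periodic with $\sup_{\epsilon}\int_{-\pi}^{\pi}|v_0^\epsilon|dx<\infty$. Let $X^\epsilon$ be the unique global $\mathcal{C}^1$ solution $[0,\infty)\to\mathcal{C}_b(\mathbb{R})$ of $$\frac{d}{dt}X^\epsilon(x,t)=\frac{1}{\epsilon}\big[X^\epsilon(x-\epsilon,t)u^{\epsilon+}(x-\epsilon,t)-X^\epsilon(x,t)|u^{\epsilon}(x,t)|+X^\epsilon(x+\epsilon,t)u^{\epsilon-}(x+\epsilon,t)\big],\quad X^\epsilon(x,0)=v_0^\epsilon(x).$$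 Let $\phi\in\mathcal{C}^\infty(\mathbb{R})$ have compact support with $\int\phi=1$, let $\alpha\in]0,1]$, $\phi_{\epsilon^\alpha}(x)=\epsilon^{-\alpha}\phi(x/\epsilon^\alpha)$, and define $v^\epsilon(x,t)=(X^\epsilon(\cdot,t)*\phi_{\epsilon^\alpha})(x)$. *)

theory Defs
  imports "HOL-Analysis.Analysis"
begin

definition smooth_real :: "(real \<Rightarrow> real) \<Rightarrow> bool" where
  "smooth_real f \<longleftrightarrow> (\<forall>k::nat. \<forall>x. ((deriv ^^ k) f) differentiable (at x))"

definition has_compact_support :: "(real \<Rightarrow> real) \<Rightarrow> bool" where
  "has_compact_support f \<longleftrightarrow> compact (closure {x. f x \<noteq> 0})"

definition mollifier :: "(real \<Rightarrow> real) \<Rightarrow> real \<Rightarrow> real \<Rightarrow> real" where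
  "mollifier \<phi> \<delta> x = \<phi> (x / \<delta>) / \<delta>"

definition conv :: "(real \<Rightarrow> real) \<Rightarrow> (real \<Rightarrow> real) \<Rightarrow> real \<Rightarrow> real" where
  "conv f g x = integral UNIV (\<lambda>y. f y * g (x - y))"

definition upwind_rhs :: "real \<Rightarrow> (real \<Rightarrow> real) \<Rightarrow> (real \<Rightarrow> real) \<Rightarrow> real \<Rightarrow> real" where
  "upwind_rhs \<epsilon> X u x =
     (1 / \<epsilon>) * (X (x - \<epsilon>) * max 0 (u (x - \<epsilon>)) - X x * \<bar>u x\<bar>
                 + X (x + \<epsilon>) * max 0 (- u (x + \<epsilon>)))"

end

theory Submission
  imports Defs
begin

text \<open>Under the CFL condition \<open>h M1 \<le> \<epsilon>\<close> an explicit Euler step of the upwind scheme is a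
  positive combination of neighbouring values written in conservation form, so it does not increase
  the \<open>L\<^sup>1\<close> norm over a period. A right Dini-derivative argument transfers this to the exact
  trajectory; that \<open>X\<^sup>\<epsilon>(t)\<close> stays \<open>2\<pi>\<close>-periodic is a Gronwall estimate for
  \<open>X\<^sup>\<epsilon>(t, x + 2\<pi>) - X\<^sup>\<epsilon>(t, x)\<close>, which solves the same scheme. Hence the \<open>L\<^sup>1\<close> norm of
  \<open>X\<^sup>\<epsilon>(t)\<close> over a period is bounded uniformly in \<open>\<epsilon>\<close> and \<open>t\<close>. The mollifier \<open>\<phi>\<^sub>\<delta>\<close> and
  its derivative are bounded by \<open>B/\<delta>\<close> and \<open>B/\<delta>\<^sup>2\<close> and, for \<open>\<delta> \<le> 1\<close>, supported in an
  interval covering a fixed number of periods, which gives both estimates with \<open>\<delta> = \<epsilon>\<^sup>\<alpha>\<close>.\<close>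

section \<open>Integrals of periodic functions\<close>

lemma periodic_add_int_multiple:
  assumes per: "\<And>x. F (x + 2*pi) = F x"
  shows "F (x + 2*pi*real_of_int k) = F x"
proof -
  have nat: "F (y + 2*pi*real n) = F y" for y n
    by (induction n) (auto simp: algebra_simps per[of "y + 2*pi*real _", simplified algebra_simps])
  show ?thesis
  proof (cases "k \<ge> 0")
    case True
    then show ?thesis using nat[of x "nat k"] by simp
  next
    case False
    then have "F (x + 2*pi*real_of_int k + 2*pi*real (nat (-k))) = F (x + 2*pi*real_of_int k)"
      using nat by blast
    then show ?thesis using False by simp
  qed
qed

lemma integral_periodic_window:
  fixes F :: "real \<Rightarrow> real"
  assumes per: "\<And>x. F (x + 2*pi) = F x" and cont: "continuous_on UNIV F"
  shows "integral {a..a+2*pi} F = integral {-pi..pi} F"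
proof -
  define k where "k = floor ((a+pi)/(2*pi))"
  define r where "r = a + pi - 2*pi*k"
  have "real_of_int k \<le> (a+pi)/(2*pi)" "(a+pi)/(2*pi) < real_of_int k + 1"
    unfolding k_def by linarith+
  then have r: "0 \<le> r" "r < 2*pi"
    unfolding r_def by (auto simp: field_simps)
  have int: "F integrable_on {c..d}" for c d
    by (rule integrable_continuous_interval) (rule continuous_on_subset[OF cont], simp)
  have shift_k: "(\<lambda>x. F (x + (-2*pi*k))) = F"
    using periodic_add_int_multiple[of F, OF per, of _ "-k"] by simp
  have "integral {a..a+2*pi} F = integral {-pi+r..pi+r} F"
    using integral_shift_real_ivl[of "-pi+r" "-2*pi*k" "pi+r" F]
    unfolding shift_k r_def by (simp add: algebra_simps)
  also have "\<dots> = integral {-pi+r..pi} F + integral {pi..pi+r} F"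
    using r by (intro Henstock_Kurzweil_Integration.integral_combine[symmetric] int) auto
  also have "integral {pi..pi+r} F = integral {-pi..-pi+r} F"
    using integral_shift_real_ivl[of pi "2*pi" "pi+r" F] per by simp
  also have "integral {-pi+r..pi} F + integral {-pi..-pi+r} F = integral {-pi..pi} F"
    using r Henstock_Kurzweil_Integration.integral_combine[of "-pi" "-pi+r" pi F] int by auto
  finally show ?thesis .
qed

lemma has_integral_periodic_shift:
  fixes F :: "real \<Rightarrow> real"
  assumes per: "\<And>x. F (x + 2*pi) = F x" and cont: "continuous_on UNIV F"
  shows "((\<lambda>x. F (x + c)) has_integral integral {-pi..pi} F) {-pi..pi}"
proof -
  have "(\<lambda>x. F (x + c)) integrable_on {-pi..pi}"
    by (intro integrable_continuous_interval continuous_on_compose2[OF cont] continuous_intros) auto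
  moreover have "integral {-pi..pi} (\<lambda>x. F (x + c)) = integral {-pi..pi} F"
    using integral_shift_real_ivl[of "-pi+c" c "pi+c" F] integral_periodic_window[OF per cont, of "-pi+c"]
    by simp
  ultimately show ?thesis
    using integrable_integral by fastforce
qed

lemma integral_periodic_multiple:
  fixes F :: "real \<Rightarrow> real"
  assumes per: "\<And>x. F (x + 2*pi) = F x" and cont: "continuous_on UNIV F"
  shows "integral {c..c+2*pi*real N} F = real N * integral {-pi..pi} F"
proof (induction N)
  case 0
  then show ?case by simp
next
  case (Suc N)
  have int: "F integrable_on {c..d}" for c d
    by (rule integrable_continuous_interval) (rule continuous_on_subset[OF cont], simp)
  have "integral {c..c+2*pi*real N} F + integral {c+2*pi*real N..c+2*pi*real N + 2*pi} F
      = integral {c..c+2*pi*real N + 2*pi} F"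
    by (rule Henstock_Kurzweil_Integration.integral_combine) (simp_all add: int)
  then show ?case
    using Suc.IH integral_periodic_window[OF per cont, of "c+2*pi*real N"]
    by (simp add: algebra_simps)
qed

lemma integral_abs_periodic_le:
  fixes f :: "real \<Rightarrow> real"
  assumes per: "\<And>x. f (x + 2*pi) = f x" and cont: "continuous_on UNIV f"
    and ab: "b \<le> a + 2*pi*real N"
  shows "integral {a..b} (\<lambda>z. \<bar>f z\<bar>) \<le> real N * integral {-pi..pi} (\<lambda>z. \<bar>f z\<bar>)"
proof -
  have int: "(\<lambda>z. \<bar>f z\<bar>) integrable_on {c..d}" for c d
    by (intro integrable_continuous_interval continuous_intros continuous_on_subset[OF cont]) auto
  have "integral {a..b} (\<lambda>z. \<bar>f z\<bar>) \<le> integral {a..a + 2*pi*real N} (\<lambda>z. \<bar>f z\<bar>)"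
    using ab by (intro integral_subset_le int) auto
  also have "\<dots> = real N * integral {-pi..pi} (\<lambda>z. \<bar>f z\<bar>)"
    using per by (intro integral_periodic_multiple continuous_intros cont) auto
  finally show ?thesis .
qed

section \<open>Monotonicity from right increments\<close>

lemma nonincreasing_if_right_increments_small:
  fixes g :: "real \<Rightarrow> real"
  assumes cont: "continuous_on {0..} g"
    and step: "\<And>t e. 0 \<le> t \<Longrightarrow> 0 < e \<Longrightarrow> \<exists>d>0. \<forall>h. 0 < h \<and> h < d \<longrightarrow> g (t+h) \<le> g t + e*h"
    and ab: "0 \<le> a" "a \<le> b"
  shows "g b \<le> g a"
proof -
  have key: "g b \<le> g a + 2*e*(b-a)" if e: "e > 0" for e
  proof -
    define S where "S = {s \<in> {a..b}. g s - 2*e*(s-a) \<le> g a}"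
    have "closed S" unfolding S_def
      by (intro continuous_on_closed_Collect_le continuous_intros continuous_on_subset[OF cont])
         (use ab in auto)
    moreover have "a \<in> S" and bdd: "bdd_above S"
      using ab unfolding S_def by (auto intro: bdd_aboveI[of _ b])
    moreover define s where "s = Sup S"
    ultimately have sS: "s \<in> S"
      using closed_contains_Sup by blast
    \<comment> \<open>the inequality propagates a little to the right of any point where it holds\<close>
    have "s = b"
    proof (rule ccontr)
      assume "s \<noteq> b"
      with sS have sb: "s < b" "a \<le> s" unfolding S_def by auto
      obtain d where d: "d > 0" "\<forall>h. 0 < h \<and> h < d \<longrightarrow> g (s+h) \<le> g s + e*h"
        using step[of s e] sb ab e by auto
      define h where "h = min (d/2) (b - s)"
      have h: "0 < h" "h < d" "s + h \<le> b" using d sb unfolding h_def by auto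
      have "g (s+h) \<le> g s + e*h" using d h by auto
      also have "\<dots> \<le> g a + 2*e*(s-a) + e*h" using sS unfolding S_def by auto
      also have "\<dots> \<le> g a + 2*e*(s+h-a)" using e h by (simp add: algebra_simps)
      finally have "s + h \<in> S" unfolding S_def using h sb by auto
      then have "s + h \<le> s" unfolding s_def using cSup_upper[OF _ bdd] by blast
      then show False using h by simp
    qed
    then show ?thesis using sS unfolding S_def by auto
  qed
  show ?thesis
  proof (rule field_le_epsilon)
    fix e :: real assume e: "0 < e"
    define e' where "e' = e / (2*(b-a+1))"
    have "e' > 0" "2*e'*(b-a) \<le> e" unfolding e'_def using e ab by (auto simp: field_simps)
    then show "g b \<le> g a + e" using key[of e'] by linarith
  qed
qed

lemma gronwall_right_increments:
  fixes f :: "real \<Rightarrow> real"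
  assumes cont: "continuous_on {0..} f" and nonneg: "\<And>t. 0 \<le> t \<Longrightarrow> 0 \<le> f t" and L: "0 \<le> L"
    and step: "\<And>t e. 0 \<le> t \<Longrightarrow> 0 < e \<Longrightarrow>
      \<exists>d>0. \<forall>h. 0 < h \<and> h < d \<longrightarrow> f (t+h) \<le> (1 + h*L) * f t + e*h"
    and t: "0 \<le> t"
  shows "f t \<le> exp (L*t) * f 0"
proof -
  define g where "g t = exp (- L * t) * f t" for t
  have "g t \<le> g 0"
  proof (rule nonincreasing_if_right_increments_small[where g=g])
    show "continuous_on {0..} g" unfolding g_def by (intro continuous_intros cont)
  next
    fix s e :: real assume s: "0 \<le> s" and e: "0 < e"
    obtain d where d: "d > 0" "\<forall>h. 0 < h \<and> h < d \<longrightarrow> f (s+h) \<le> (1 + h*L) * f s + e*h"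
      using step[OF s e] by blast
    have "g (s+h) \<le> g s + e*h" if h: "0 < h" "h < d" for h
    proof -
      have damp: "exp (- L * h) * (1 + h*L) \<le> 1"
        using exp_ge_add_one_self[of "L*h"]
        by (simp add: mult.commute exp_minus divide_simps)
      have "g (s+h) \<le> exp (- L * (s+h)) * ((1 + h*L) * f s + e*h)"
        unfolding g_def using d h by (simp add: mult_left_mono)
      also have "\<dots> = exp (- L * s) * (exp (- L * h) * (1 + h*L)) * f s + exp (- L * (s+h)) * (e*h)"
        by (simp add: algebra_simps mult_exp_exp)
      also have "\<dots> \<le> exp (- L * s) * 1 * f s + 1 * (e*h)"
        using damp L s h e nonneg[OF s]
        by (intro add_mono mult_right_mono mult_left_mono) auto
      finally show ?thesis unfolding g_def by simp
    qed
    then show "\<exists>d>0. \<forall>h. 0 < h \<and> h < d \<longrightarrow> g (s+h) \<le> g s + e*h" using d by blast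
  qed (use t in auto)
  then show ?thesis
    unfolding g_def by (simp add: exp_minus field_simps)
qed

section \<open>The explicit upwind step\<close>

definition upwind_euler :: "real \<Rightarrow> real \<Rightarrow> (real \<Rightarrow> real) \<Rightarrow> (real \<Rightarrow> real) \<Rightarrow> real \<Rightarrow> real" where
  "upwind_euler \<epsilon> h Z U x = Z x + h * upwind_rhs \<epsilon> Z U x"

lemma continuous_on_upwind_euler:
  assumes "continuous_on UNIV Z" "continuous_on UNIV U"
  shows "continuous_on UNIV (upwind_euler \<epsilon> h Z U)"
  unfolding upwind_euler_def upwind_rhs_def
  by (intro continuous_intros continuous_on_compose2[OF assms(1)] continuous_on_compose2[OF assms(2)]) auto

lemma upwind_rhs_periodic_defect:
  assumes per: "\<And>x. U (x + 2*pi) = U x"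
  shows "upwind_rhs \<epsilon> Z U (x + 2*pi) - upwind_rhs \<epsilon> Z U x
       = upwind_rhs \<epsilon> (\<lambda>y. Z (y + 2*pi) - Z y) U x"
  using per[of "x - \<epsilon>"] per[of "x + \<epsilon>"] per[of x]
  unfolding upwind_rhs_def by (simp add: algebra_simps)

text \<open>Under the CFL condition \<open>h M1 \<le> \<epsilon>\<close> an explicit Euler step of the scheme combines
  the three neighbouring values with nonnegative weights.\<close>
lemma abs_upwind_euler_le:
  fixes Z U :: "real \<Rightarrow> real"
  assumes eps: "0 < \<epsilon>" and U: "\<And>y. \<bar>U y\<bar> \<le> M1" and h: "0 \<le> h" "h * M1 \<le> \<epsilon>"
  shows "\<bar>upwind_euler \<epsilon> h Z U x\<bar> \<le>
     (h/\<epsilon>) * (\<bar>Z (x-\<epsilon>)\<bar> * max 0 (U (x-\<epsilon>))) + (1 - h*\<bar>U x\<bar>/\<epsilon>) * \<bar>Z x\<bar>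
     + (h/\<epsilon>) * (\<bar>Z (x+\<epsilon>)\<bar> * max 0 (- U (x+\<epsilon>)))"
proof -
  have "h*\<bar>U x\<bar> \<le> h * M1" using U h by (simp add: mult_left_mono)
  then have "1 - h*\<bar>U x\<bar>/\<epsilon> \<ge> 0" using eps h by (simp add: field_simps)
  moreover have "upwind_euler \<epsilon> h Z U x =
     (h/\<epsilon>) * (Z (x-\<epsilon>) * max 0 (U (x-\<epsilon>))) + (1 - h*\<bar>U x\<bar>/\<epsilon>) * Z x
     + (h/\<epsilon>) * (Z (x+\<epsilon>) * max 0 (- U (x+\<epsilon>)))"
    unfolding upwind_euler_def upwind_rhs_def using eps by (simp add: field_simps)
  ultimately show ?thesis
    using eps h
    by (simp only:) (rule order_trans[OF abs_triangle_ineq] add_mono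
        | auto simp: abs_mult)+
qed

lemma abs_upwind_euler_le_sup:
  fixes Z U :: "real \<Rightarrow> real"
  assumes eps: "0 < \<epsilon>" and U: "\<And>y. \<bar>U y\<bar> \<le> M1" and h: "0 \<le> h" "h * M1 \<le> \<epsilon>"
    and B: "\<And>y. \<bar>Z y\<bar> \<le> B"
  shows "\<bar>upwind_euler \<epsilon> h Z U x\<bar> \<le> (1 + h * (2*M1/\<epsilon>)) * B"
proof -
  have B0: "B \<ge> 0" and M0: "M1 \<ge> 0" using B[of 0] U[of 0] by auto
  have hh: "h/\<epsilon> \<ge> 0" using eps h by simp
  have "h*\<bar>U x\<bar> \<le> h * M1" using U h by (simp add: mult_left_mono)
  then have c: "0 \<le> 1 - h*\<bar>U x\<bar>/\<epsilon>" "1 - h*\<bar>U x\<bar>/\<epsilon> \<le> 1"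
    using eps h by (auto simp: field_simps)
  have "\<bar>Z (x-\<epsilon>)\<bar> * max 0 (U (x-\<epsilon>)) \<le> B * M1" "\<bar>Z (x+\<epsilon>)\<bar> * max 0 (- U (x+\<epsilon>)) \<le> B * M1"
    using B U B0 M0 by (intro mult_mono; auto simp: abs_le_iff max_def)+
  moreover have "(1 - h*\<bar>U x\<bar>/\<epsilon>) * \<bar>Z x\<bar> \<le> 1 * B"
    using c B[of x] B0 by (intro mult_mono) auto
  ultimately have "(h/\<epsilon>) * (\<bar>Z (x-\<epsilon>)\<bar> * max 0 (U (x-\<epsilon>))) + (1 - h*\<bar>U x\<bar>/\<epsilon>) * \<bar>Z x\<bar>
     + (h/\<epsilon>) * (\<bar>Z (x+\<epsilon>)\<bar> * max 0 (- U (x+\<epsilon>))) \<le> (h/\<epsilon>) * (B*M1) + 1 * B + (h/\<epsilon>) * (B*M1)"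
    using hh by (intro add_mono mult_left_mono) auto
  also have "\<dots> = (1 + h * (2*M1/\<epsilon>)) * B" by (simp add: field_simps)
  finally show ?thesis using abs_upwind_euler_le[where U=U and Z=Z and x=x, OF eps U h] by linarith
qed

text \<open>Writing \<open>\<bar>U\<bar> = U\<^sup>+ + U\<^sup>-\<close>, the weighted bound of \<open>abs_upwind_euler_le\<close> is \<open>\<bar>Z\<bar>\<close> plus
  differences of the shifted fluxes \<open>\<bar>Z\<bar> U\<^sup>+\<close> and \<open>\<bar>Z\<bar> U\<^sup>-\<close>, which integrate to zero over a period.\<close>
lemma integral_abs_upwind_euler_le:
  fixes Z U :: "real \<Rightarrow> real"
  assumes eps: "0 < \<epsilon>" and U: "\<And>y. \<bar>U y\<bar> \<le> M1" and h: "0 \<le> h" "h * M1 \<le> \<epsilon>"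
    and cZ: "continuous_on UNIV Z" and cU: "continuous_on UNIV U"
    and pZ: "\<And>x. Z (x + 2*pi) = Z x" and pU: "\<And>x. U (x + 2*pi) = U x"
  shows "integral {-pi..pi} (\<lambda>x. \<bar>upwind_euler \<epsilon> h Z U x\<bar>) \<le> integral {-pi..pi} (\<lambda>x. \<bar>Z x\<bar>)"
proof -
  define Q1 where "Q1 y = \<bar>Z y\<bar> * max 0 (U y)" for y
  define Q2 where "Q2 y = \<bar>Z y\<bar> * max 0 (- U y)" for y
  define P where "P x = \<bar>Z x\<bar> + (h/\<epsilon>) * ((Q1 (x + (-\<epsilon>)) - Q1 x) + (Q2 (x + \<epsilon>) - Q2 x))" for x
  have cQ: "continuous_on UNIV Q1" "continuous_on UNIV Q2"
    unfolding Q1_def Q2_def by (intro continuous_intros cZ cU)+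
  have pQ: "Q1 (x + 2*pi) = Q1 x" "Q2 (x + 2*pi) = Q2 x" for x
    unfolding Q1_def Q2_def using pZ pU by auto
  have pointwise: "\<bar>upwind_euler \<epsilon> h Z U x\<bar> \<le> P x" for x
  proof -
    have "\<bar>U x\<bar> = max 0 (U x) + max 0 (- U x)" by auto
    then have "(h/\<epsilon>) * (\<bar>Z (x-\<epsilon>)\<bar> * max 0 (U (x-\<epsilon>))) + (1 - h*\<bar>U x\<bar>/\<epsilon>) * \<bar>Z x\<bar>
       + (h/\<epsilon>) * (\<bar>Z (x+\<epsilon>)\<bar> * max 0 (- U (x+\<epsilon>))) = P x"
      unfolding P_def Q1_def Q2_def using eps by (simp add: field_simps)
    then show ?thesis using abs_upwind_euler_le[where U=U and Z=Z and x=x, OF eps U h] by simp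
  qed
  have flux: "((\<lambda>x. Q (x + c) - Q x) has_integral 0) {-pi..pi}"
    if "continuous_on UNIV Q" "\<And>x. Q (x + 2*pi) = Q x" for Q :: "real \<Rightarrow> real" and c
    using has_integral_diff[OF has_integral_periodic_shift[OF that(2,1), of c]
        has_integral_periodic_shift[OF that(2,1), of 0]]
    by simp
  have "(P has_integral integral {-pi..pi} (\<lambda>x. \<bar>Z x\<bar>) + (h/\<epsilon>) * (0 + 0)) {-pi..pi}"
    unfolding P_def
    by (intro has_integral_add has_integral_mult_right flux cQ pQ integrable_integral
        integrable_continuous_interval continuous_intros continuous_on_subset[OF cZ]) auto
  moreover have "((\<lambda>x. \<bar>upwind_euler \<epsilon> h Z U x\<bar>) has_integral
      integral {-pi..pi} (\<lambda>x. \<bar>upwind_euler \<epsilon> h Z U x\<bar>)) {-pi..pi}"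
    by (intro integrable_integral integrable_continuous_interval continuous_intros
        continuous_on_subset[OF continuous_on_upwind_euler[OF cZ cU]]) auto
  ultimately show ?thesis
    using pointwise by (auto intro: has_integral_le)
qed

section \<open>Trajectories of the upwind scheme\<close>

lemma abs_apply_bcontfun_diff_le: "\<bar>apply_bcontfun f x - apply_bcontfun g x\<bar> \<le> norm (f - g)"
  using norm_bounded[of "f - g" x] by simp

lemma continuous_on_if_increments_dominated:
  fixes X :: "real \<Rightarrow> 'a::real_normed_vector" and g :: "real \<Rightarrow> real"
  assumes cX: "continuous_on S X"
    and dom: "\<And>s t. s \<in> S \<Longrightarrow> t \<in> S \<Longrightarrow> \<bar>g s - g t\<bar> \<le> K * norm (X s - X t)"
  shows "continuous_on S g"
  unfolding continuous_on_def
proof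
  fix t assume t: "t \<in> S"
  have "((\<lambda>s. K * norm (X s - X t)) \<longlongrightarrow> K * norm (X t - X t)) (at t within S)"
    using cX t unfolding continuous_on_def by (intro tendsto_intros) auto
  moreover have "\<forall>\<^sub>F s in at t within S. norm (g s - g t) \<le> K * norm (X s - X t)"
    using dom t by (auto simp: eventually_at_filter)
  ultimately have "((\<lambda>s. g s - g t) \<longlongrightarrow> 0) (at t within S)"
    by (auto intro: Lim_null_comparison)
  then show "(g \<longlongrightarrow> g t) (at t within S)"
    by (simp add: LIM_zero_iff)
qed

locale upwind_trajectory =
  fixes \<epsilon> M1 :: real and X u :: "real \<Rightarrow> (real \<Rightarrow>\<^sub>C real)"
  assumes eps: "0 < \<epsilon>" and M1: "0 < M1"
    and u_bound: "\<And>t x. 0 \<le> t \<Longrightarrow> \<bar>u t x\<bar> \<le> M1"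
    and u_periodic: "\<And>t x. 0 \<le> t \<Longrightarrow> u t (x + 2*pi) = u t x"
    and ode: "\<And>t. 0 \<le> t \<Longrightarrow> \<exists>D. (X has_vector_derivative D) (at t within {0..}) \<and>
       (\<forall>x. apply_bcontfun D x = upwind_rhs \<epsilon> (X t) (u t) x)"
begin

lemma continuous_on_X: "continuous_on {0..} X"
  unfolding continuous_on_eq_continuous_within
  using ode has_vector_derivative_continuous by fastforce

lemma euler_step_approx:
  assumes t: "0 \<le> t" and e: "0 < e"
  shows "\<exists>d>0. \<forall>h. 0 < h \<and> h < d \<longrightarrow>
     (\<forall>x. \<bar>X (t+h) x - upwind_euler \<epsilon> h (X t) (u t) x\<bar> \<le> e*h)"
proof -
  obtain D where D: "(X has_vector_derivative D) (at t within {0..})"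
     "\<forall>x. apply_bcontfun D x = upwind_rhs \<epsilon> (X t) (u t) x"
    using ode[OF t] by blast
  obtain d where d: "d > 0" "\<forall>y\<in>{0..}. norm (y - t) < d \<longrightarrow>
      norm (X y - X t - (y - t) *\<^sub>R D) \<le> e * norm (y - t)"
    using D(1) e unfolding has_vector_derivative_def has_derivative_within_alt by blast
  have "\<bar>X (t+h) x - upwind_euler \<epsilon> h (X t) (u t) x\<bar> \<le> e*h" if h: "0 < h" "h < d" for h x
  proof -
    have "\<bar>X (t+h) x - upwind_euler \<epsilon> h (X t) (u t) x\<bar> \<le> norm (X (t+h) - X t - h *\<^sub>R D)"
      using norm_bounded[of "X (t+h) - X t - h *\<^sub>R D" x] D(2)
      unfolding upwind_euler_def by (simp add: algebra_simps)
    also have "\<dots> \<le> e * h"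
      using d(2)[rule_format, of "t+h"] h t by auto
    finally show ?thesis .
  qed
  then show ?thesis using d(1) by blast
qed

text \<open>Uniqueness-type argument: the sup norm of \<open>X t (\<cdot> + 2\<pi>) - X t\<close> obeys a Gronwall
  inequality, because by \<open>upwind_rhs_periodic_defect\<close> it evolves by the same scheme.\<close>
lemma periodicity_preserved:
  assumes X0: "\<And>x. X 0 (x + 2*pi) = X 0 x" and t: "0 \<le> t"
  shows "X t (x + 2*pi) = X t x"
proof -
  define W where "W t x = X t (x + 2*pi) - X t x" for t x
  define f where "f t = (SUP x. \<bar>W t x\<bar>)" for t
  define L where "L = 2*M1/\<epsilon>"
  have W_diff: "\<bar>W s x - W t x\<bar> \<le> 2 * norm (X s - X t)" for s t x
    unfolding W_def
    using abs_apply_bcontfun_diff_le[of "X s" x "X t"] abs_apply_bcontfun_diff_le[of "X s" "x+2*pi" "X t"]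
    by linarith
  have f_upper: "\<bar>W t x\<bar> \<le> f t" for t x
  proof -
    have "\<bar>W t y\<bar> \<le> 2 * norm (X t)" for y
      using norm_bounded[of "X t" y] norm_bounded[of "X t" "y + 2*pi"]
      unfolding W_def real_norm_def by linarith
    then show ?thesis
      unfolding f_def by (intro cSUP_upper bdd_aboveI2) auto
  qed
  have f_least: "f t \<le> B" if "\<And>x. \<bar>W t x\<bar> \<le> B" for t B
    unfolding f_def by (rule cSUP_least) (use that in auto)
  have f_diff: "f s \<le> f t + 2 * norm (X s - X t)" for s t
  proof (rule f_least)
    fix x
    show "\<bar>W s x\<bar> \<le> f t + 2 * norm (X s - X t)"
      using W_diff[of s x t] f_upper[of t x] by linarith
  qed
  have "\<bar>f s - f t\<bar> \<le> 2 * norm (X s - X t)" for s t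
    using f_diff[of s t] f_diff[of t s] norm_minus_commute[of "X t" "X s"] by linarith
  then have f_cont: "continuous_on {0..} f"
    by (intro continuous_on_if_increments_dominated[OF continuous_on_X])
  have f_step: "\<exists>d>0. \<forall>h. 0 < h \<and> h < d \<longrightarrow> f (s+h) \<le> (1 + h*L) * f s + e*h"
    if s: "0 \<le> s" and e: "0 < e" for s e
  proof -
    obtain d where d: "d > 0" "\<forall>h. 0 < h \<and> h < d \<longrightarrow>
       (\<forall>x. \<bar>X (s+h) x - upwind_euler \<epsilon> h (X s) (u s) x\<bar> \<le> (e/2)*h)"
      using euler_step_approx[OF s, of "e/2"] e by auto
    have "f (s+h) \<le> (1 + h*L) * f s + e*h" if h: "0 < h" "h < min d (\<epsilon>/M1)" for h
    proof (rule f_least)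
      fix x
      have hM: "h * M1 \<le> \<epsilon>" using h M1 by (simp add: field_simps)
      have "upwind_euler \<epsilon> h (W s) (u s) x
          = upwind_euler \<epsilon> h (X s) (u s) (x + 2*pi) - upwind_euler \<epsilon> h (X s) (u s) x"
        using upwind_rhs_periodic_defect[of "u s" \<epsilon> "X s" x] u_periodic[OF s]
        unfolding upwind_euler_def W_def by (simp add: algebra_simps)
      moreover have "\<bar>upwind_euler \<epsilon> h (W s) (u s) x\<bar> \<le> (1 + h*L) * f s"
        unfolding L_def using u_bound[OF s] h hM f_upper
        by (intro abs_upwind_euler_le_sup[OF eps]) auto
      moreover have approx: "\<bar>X (s+h) y - upwind_euler \<epsilon> h (X s) (u s) y\<bar> \<le> (e/2)*h" for y
        using d h by auto
      ultimately show "\<bar>W (s+h) x\<bar> \<le> (1 + h*L) * f s + e*h"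
        using approx[of x] approx[of "x + 2*pi"] unfolding W_def by linarith
    qed
    then show ?thesis
      by (intro exI[of _ "min d (\<epsilon>/M1)"]) (use d eps M1 in auto)
  qed
  have f_nonneg: "0 \<le> f t" for t
    using f_upper[of t 0] by linarith
  have "f t \<le> exp (L*t) * f 0"
    using L_def eps M1 f_nonneg by (intro gronwall_right_increments[OF f_cont _ _ f_step t]) auto
  also have "f 0 \<le> 0"
    by (rule f_least) (simp add: W_def X0)
  finally have "f t \<le> 0" by (simp add: mult_le_0_iff)
  then show ?thesis
    using f_upper[of t x] unfolding W_def by simp
qed

lemma L1_norm_nonincreasing:
  assumes X_periodic: "\<And>t x. 0 \<le> t \<Longrightarrow> X t (x + 2*pi) = X t x" and t: "0 \<le> t"
  shows "integral {-pi..pi} (\<lambda>x. \<bar>X t x\<bar>) \<le> integral {-pi..pi} (\<lambda>x. \<bar>X 0 x\<bar>)"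
proof -
  define m where "m t = integral {-pi..pi} (\<lambda>x. \<bar>X t x\<bar>)" for t
  have integrable: "(\<lambda>x. \<bar>Y x\<bar>) integrable_on {-pi..pi}" for Y :: "real \<Rightarrow>\<^sub>C real"
    by (intro integrable_continuous_interval continuous_intros continuous_on_apply_bcontfun)
  have m_diff: "m s \<le> m t + 2*pi * norm (X s - X t)" for s t
  proof -
    have "\<bar>X s x\<bar> \<le> \<bar>X t x\<bar> + norm (X s - X t)" for x
      using abs_apply_bcontfun_diff_le[of "X s" x "X t"] by linarith
    then have "m s \<le> integral {-pi..pi} (\<lambda>x. \<bar>X t x\<bar> + norm (X s - X t))"
      unfolding m_def using integrable by (intro integral_le integrable_add) auto
    then show ?thesis
      unfolding m_def
      using integral_add[OF integrable[of "X t"] integrable_const_ivl[where c="norm (X s - X t)"]]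
      by simp
  qed
  have "\<bar>m s - m t\<bar> \<le> 2*pi * norm (X s - X t)" for s t
    using m_diff[of s t] m_diff[of t s] unfolding norm_minus_commute[of "X t" "X s"] by linarith
  then have m_cont: "continuous_on {0..} m"
    by (intro continuous_on_if_increments_dominated[OF continuous_on_X])
  have m_step: "\<exists>d>0. \<forall>h. 0 < h \<and> h < d \<longrightarrow> m (s+h) \<le> m s + e*h"
    if s: "0 \<le> s" and e: "0 < e" for s e
  proof -
    obtain d where d: "d > 0" "\<forall>h. 0 < h \<and> h < d \<longrightarrow>
       (\<forall>x. \<bar>X (s+h) x - upwind_euler \<epsilon> h (X s) (u s) x\<bar> \<le> (e/(2*pi))*h)"
      using euler_step_approx[OF s, of "e/(2*pi)"] e by auto
    have "m (s+h) \<le> m s + e*h" if h: "0 < h" "h < min d (\<epsilon>/M1)" for h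
    proof -
      let ?E = "upwind_euler \<epsilon> h (X s) (u s)"
      have cE: "continuous_on UNIV ?E"
        by (intro continuous_on_upwind_euler continuous_on_apply_bcontfun)
      have approx: "\<bar>X (s+h) x - ?E x\<bar> \<le> (e/(2*pi))*h" for x
        using d h by simp
      have "\<bar>X (s+h) x\<bar> \<le> \<bar>?E x\<bar> + (e/(2*pi))*h" for x
        using approx[of x] by linarith
      then have "m (s+h) \<le> integral {-pi..pi} (\<lambda>x. \<bar>?E x\<bar> + (e/(2*pi))*h)"
        unfolding m_def
        by (intro integral_le integrable integrable_continuous_interval
            continuous_intros continuous_on_subset[OF cE]) auto
      also have "\<dots> = integral {-pi..pi} (\<lambda>x. \<bar>?E x\<bar>) + e*h"
        by (subst integral_add) (auto intro!: integrable_continuous_interval continuous_intros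
            continuous_on_subset[OF cE])
      also have "integral {-pi..pi} (\<lambda>x. \<bar>?E x\<bar>) \<le> m s"
        unfolding m_def using h eps M1 u_bound[OF s] u_periodic[OF s] X_periodic[OF s]
        by (intro integral_abs_upwind_euler_le) (auto simp: field_simps)
      finally show ?thesis by simp
    qed
    then show ?thesis
      by (intro exI[of _ "min d (\<epsilon>/M1)"]) (use d eps M1 in auto)
  qed
  show ?thesis
    using nonincreasing_if_right_increments_small[OF m_cont m_step, of 0 t] t
    unfolding m_def by auto
qed

end

section \<open>Mollification\<close>

lemma continuous_vanishing_outside_bounded:
  fixes g :: "real \<Rightarrow> real"
  assumes cont: "continuous_on UNIV g" and vanish: "\<And>s. R < \<bar>s\<bar> \<Longrightarrow> g s = 0"
  obtains B where "\<And>s. \<bar>g s\<bar> \<le> B"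
proof -
  have "bounded (g ` {-R..R})"
    by (intro compact_imp_bounded compact_continuous_image continuous_on_subset[OF cont]) auto
  then obtain B where B: "\<forall>s \<in> {-R..R}. \<bar>g s\<bar> \<le> B"
    unfolding bounded_iff by auto
  have "\<bar>g s\<bar> \<le> max B 0" for s
  proof (cases "R < \<bar>s\<bar>")
    case False
    then have "s \<in> {-R..R}" by auto
    then show ?thesis using B by fastforce
  qed (use vanish in auto)
  then show ?thesis by (rule that)
qed

lemma smooth_compact_support_bounds:
  fixes \<phi> :: "real \<Rightarrow> real"
  assumes smooth: "smooth_real \<phi>" and supp: "has_compact_support \<phi>"
  obtains R B where "\<And>s. R < \<bar>s\<bar> \<Longrightarrow> \<phi> s = 0"
    and "\<And>s. (\<phi> has_real_derivative deriv \<phi> s) (at s)" and "continuous_on UNIV (deriv \<phi>)"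
    and "\<And>s. \<bar>\<phi> s\<bar> \<le> B" and "\<And>s. \<bar>deriv \<phi> s\<bar> \<le> B"
proof -
  have "((deriv ^^ 0) \<phi>) differentiable (at s)" "((deriv ^^ 1) \<phi>) differentiable (at s)" for s
    using smooth unfolding smooth_real_def by blast+
  then have der: "(\<phi> has_real_derivative deriv \<phi> s) (at s)"
    and der2: "deriv \<phi> differentiable (at s)" for s
    by (simp_all add: DERIV_deriv_iff_real_differentiable)
  have cont: "continuous_on UNIV \<phi>" "continuous_on UNIV (deriv \<phi>)"
    using der der2 by (auto intro!: continuous_at_imp_continuous_on intro: DERIV_isCont
        differentiable_imp_continuous_within)
  obtain R where R: "\<And>s. s \<in> closure {x. \<phi> x \<noteq> 0} \<Longrightarrow> norm s \<le> R"
    using compact_imp_bounded[OF supp[unfolded has_compact_support_def]] unfolding bounded_iff by auto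
  have vanish: "\<phi> s = 0" if "R < \<bar>s\<bar>" for s
    using R[of s] closure_subset[of "{x. \<phi> x \<noteq> 0}"] that by force
  have "deriv \<phi> s = 0" if s: "R < \<bar>s\<bar>" for s
  proof -
    have "((\<lambda>_. 0) has_real_derivative 0) (at s)" by simp
    then have "(\<phi> has_real_derivative 0) (at s)"
      by (rule has_field_derivative_transform_within_open[where S="{y. R < \<bar>y\<bar>}"])
         (use s vanish in \<open>auto intro!: open_Collect_less continuous_intros\<close>)
    then show ?thesis by (rule DERIV_imp_deriv)
  qed
  then obtain B0 B1 where B: "\<And>s. \<bar>\<phi> s\<bar> \<le> B0" "\<And>s. \<bar>deriv \<phi> s\<bar> \<le> B1"
    using continuous_vanishing_outside_bounded[OF cont(1) vanish]
      continuous_vanishing_outside_bounded[OF cont(2)] by metis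
  have "\<bar>\<phi> s\<bar> \<le> max B0 B1" "\<bar>deriv \<phi> s\<bar> \<le> max B0 B1" for s
    using B[of s] by auto
  then show ?thesis
    using that vanish der cont(2) by blast
qed

lemma abs_integral_mult_le:
  fixes f k :: "real \<Rightarrow> real"
  assumes cf: "continuous_on {a..b} f" and ck: "continuous_on {a..b} k"
    and K: "\<And>z. z \<in> {a..b} \<Longrightarrow> \<bar>k z\<bar> \<le> K"
  shows "\<bar>integral {a..b} (\<lambda>z. f z * k z)\<bar> \<le> K * integral {a..b} (\<lambda>z. \<bar>f z\<bar>)"
proof -
  have "norm (integral {a..b} (\<lambda>z. f z * k z)) \<le> integral {a..b} (\<lambda>z. \<bar>f z\<bar> * K)"
    using K
    by (intro Henstock_Kurzweil_Integration.integral_norm_bound_integral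
        integrable_continuous_interval continuous_intros cf ck)
       (auto simp: abs_mult mult_left_mono)
  then show ?thesis by (simp add: mult.commute)
qed

lemma conv_mollifier_eq_local_integral:
  fixes f \<phi> :: "real \<Rightarrow> real"
  assumes \<delta>: "0 < \<delta>" "\<delta> \<le> 1" and vanish: "\<And>s. R < \<bar>s\<bar> \<Longrightarrow> \<phi> s = 0"
    and y: "\<bar>y - x\<bar> < 1"
  shows "conv f (mollifier \<phi> \<delta>) y = integral {x-R-1..x+R+1} (\<lambda>z. f z * mollifier \<phi> \<delta> (y - z))"
proof -
  have "f z * mollifier \<phi> \<delta> (y - z) = 0" if "z \<notin> {x-R-1..x+R+1}" for z
  proof -
    have "R < \<bar>y - z\<bar>" using that y by auto
    also have "\<delta> * \<bar>y - z\<bar> \<le> 1 * \<bar>y - z\<bar>"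
      using \<delta> by (intro mult_right_mono) auto
    then have "\<bar>y - z\<bar> \<le> \<bar>(y - z)/\<delta>\<bar>"
      using \<delta> by (simp add: abs_divide field_simps)
    finally show ?thesis unfolding mollifier_def using vanish by simp
  qed
  then have restrict: "(\<lambda>z. f z * mollifier \<phi> \<delta> (y - z))
      = (\<lambda>z. if z \<in> {x-R-1..x+R+1} then f z * mollifier \<phi> \<delta> (y - z) else 0)"
    by auto
  show ?thesis
    unfolding conv_def by (subst restrict) (rule integral_restrict_UNIV)
qed

lemma has_field_derivative_conv_mollifier:
  fixes f \<phi> :: "real \<Rightarrow> real"
  assumes cf: "continuous_on UNIV f" and \<delta>: "0 < \<delta>" "\<delta> \<le> 1"
    and vanish: "\<And>s. R < \<bar>s\<bar> \<Longrightarrow> \<phi> s = 0"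
    and der: "\<And>s. (\<phi> has_real_derivative deriv \<phi> s) (at s)"
    and cd: "continuous_on UNIV (deriv \<phi>)"
  shows "((\<lambda>y. conv f (mollifier \<phi> \<delta>) y) has_field_derivative
      integral {x-R-1..x+R+1} (\<lambda>z. f z * (deriv \<phi> ((x - z)/\<delta>) / \<delta>^2))) (at x)"
proof -
  let ?I = "{x-R-1..x+R+1}"
  have c\<phi>: "continuous_on UNIV \<phi>"
    using der by (intro continuous_at_imp_continuous_on ballI DERIV_isCont)
  have "((\<lambda>y. integral (cbox (x-R-1) (x+R+1)) (\<lambda>z. f z * mollifier \<phi> \<delta> (y - z)))
      has_field_derivative integral (cbox (x-R-1) (x+R+1)) (\<lambda>z. f z * (deriv \<phi> ((x - z)/\<delta>) / \<delta>^2)))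
      (at x within UNIV)"
  proof (rule leibniz_rule_field_derivative)
    fix y z
    have "((\<lambda>y. (y - z)/\<delta>) has_field_derivative 1/\<delta>) (at y)"
      using \<delta> by (auto intro!: derivative_eq_intros)
    from DERIV_chain2[OF der this]
    have "((\<lambda>y. f z * (\<phi> ((y - z)/\<delta>) / \<delta>)) has_field_derivative
        f z * (deriv \<phi> ((y - z)/\<delta>) * (1/\<delta>) / \<delta>)) (at y)"
      by (intro DERIV_cmult DERIV_cdivide)
    then show "((\<lambda>y. f z * mollifier \<phi> \<delta> (y - z)) has_field_derivative
        f z * (deriv \<phi> ((y - z)/\<delta>) / \<delta>^2)) (at y within UNIV)"
      unfolding mollifier_def by (simp add: power2_eq_square)
  next
    show "(\<lambda>z. f z * mollifier \<phi> \<delta> (y - z)) integrable_on cbox (x-R-1) (x+R+1)" for y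
      unfolding mollifier_def using \<delta>
      by (intro integrable_continuous continuous_intros continuous_on_subset[OF cf]
          continuous_on_compose2[OF c\<phi>]) auto
  next
    show "continuous_on (UNIV \<times> cbox (x-R-1) (x+R+1)) (\<lambda>(y, z). f z * (deriv \<phi> ((y - z)/\<delta>) / \<delta>^2))"
      unfolding split_beta using \<delta>
      by (intro continuous_intros continuous_on_compose2[OF cf] continuous_on_compose2[OF cd]) auto
  qed auto
  then have "((\<lambda>y. integral ?I (\<lambda>z. f z * mollifier \<phi> \<delta> (y - z)))
      has_field_derivative integral ?I (\<lambda>z. f z * (deriv \<phi> ((x - z)/\<delta>) / \<delta>^2))) (at x)"
    by simp
  then show ?thesis
  proof (rule has_field_derivative_transform_within_open[where S="ball x 1"])
    fix y assume "y \<in> ball x 1"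
    then show "integral ?I (\<lambda>z. f z * mollifier \<phi> \<delta> (y - z)) = conv f (mollifier \<phi> \<delta>) y"
      using conv_mollifier_eq_local_integral[where f=f and y=y and x=x, OF \<delta> vanish]
      by (simp add: dist_real_def abs_minus_commute)
  qed auto
qed

lemma conv_mollifier_bounds:
  fixes f \<phi> :: "real \<Rightarrow> real"
  assumes per: "\<And>x. f (x + 2*pi) = f x" and cf: "continuous_on UNIV f"
    and L1: "integral {-pi..pi} (\<lambda>x. \<bar>f x\<bar>) \<le> C"
    and \<delta>: "0 < \<delta>" "\<delta> \<le> 1" and vanish: "\<And>s. R < \<bar>s\<bar> \<Longrightarrow> \<phi> s = 0"
    and der: "\<And>s. (\<phi> has_real_derivative deriv \<phi> s) (at s)"
    and cd: "continuous_on UNIV (deriv \<phi>)"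
    and B: "\<And>s. \<bar>\<phi> s\<bar> \<le> B" "\<And>s. \<bar>deriv \<phi> s\<bar> \<le> B"
    and N: "R + 1 \<le> pi * real N"
  shows "\<bar>conv f (mollifier \<phi> \<delta>) x\<bar> \<le> B * (real N * C) / \<delta>"
    and "\<bar>deriv (\<lambda>y. conv f (mollifier \<phi> \<delta>) y) x\<bar> \<le> B * (real N * C) / \<delta>^2"
proof -
  let ?I = "{x-R-1..x+R+1}"
  have c\<phi>: "continuous_on UNIV \<phi>"
    using der by (intro continuous_at_imp_continuous_on ballI DERIV_isCont)
  have mass: "integral ?I (\<lambda>z. \<bar>f z\<bar>) \<le> real N * C"
    using integral_abs_periodic_le[OF per cf, of "x+R+1" "x-R-1" N] N
      mult_left_mono[OF L1, of "real N"]
    by (simp add: algebra_simps)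
  have "\<bar>integral ?I (\<lambda>z. f z * mollifier \<phi> \<delta> (x - z))\<bar> \<le> B/\<delta> * integral ?I (\<lambda>z. \<bar>f z\<bar>)"
    unfolding mollifier_def using \<delta> B(1)
    by (intro abs_integral_mult_le continuous_on_subset[OF cf] continuous_intros
        continuous_on_compose2[OF c\<phi>]) (auto simp: abs_divide divide_right_mono)
  also have "\<dots> \<le> B/\<delta> * (real N * C)"
    using mass B(1)[of 0] \<delta> by (intro mult_left_mono) auto
  finally show "\<bar>conv f (mollifier \<phi> \<delta>) x\<bar> \<le> B * (real N * C) / \<delta>"
    using conv_mollifier_eq_local_integral[where f=f and y=x and x=x, OF \<delta> vanish] by simp
  have "\<bar>integral ?I (\<lambda>z. f z * (deriv \<phi> ((x - z)/\<delta>) / \<delta>^2))\<bar> \<le> B/\<delta>^2 * integral ?I (\<lambda>z. \<bar>f z\<bar>)"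
    using \<delta> B(2)
    by (intro abs_integral_mult_le continuous_on_subset[OF cf] continuous_intros
        continuous_on_compose2[OF cd]) (auto simp: abs_divide divide_right_mono)
  also have "\<dots> \<le> B/\<delta>^2 * (real N * C)"
    using mass B(1)[of 0] \<delta> by (intro mult_left_mono) auto
  finally show "\<bar>deriv (\<lambda>y. conv f (mollifier \<phi> \<delta>) y) x\<bar> \<le> B * (real N * C) / \<delta>^2"
    using DERIV_imp_deriv[OF has_field_derivative_conv_mollifier[OF cf \<delta> vanish der cd]] by simp
qed

theorem mainTheorem2:
  fixes u :: "real \<Rightarrow> real \<Rightarrow> (real \<Rightarrow>\<^sub>C real)"
    and v0 :: "real \<Rightarrow> (real \<Rightarrow>\<^sub>C real)"
    and X :: "real \<Rightarrow> real \<Rightarrow> (real \<Rightarrow>\<^sub>C real)"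
    and \<phi> :: "real \<Rightarrow> real"
    and \<alpha> M1 :: real
  assumes u_per: "\<And>\<epsilon> x t. 0 < \<epsilon> \<Longrightarrow> \<epsilon> < 1 \<Longrightarrow> 0 \<le> t \<Longrightarrow> u \<epsilon> t (x + 2 * pi) = u \<epsilon> t x"
    and u_cont: "\<And>\<epsilon>. 0 < \<epsilon> \<Longrightarrow> \<epsilon> < 1 \<Longrightarrow> continuous_on {0..} (u \<epsilon>)"
    and M1_pos: "M1 > 0"
    and u_bound: "\<And>\<epsilon> x t. 0 < \<epsilon> \<Longrightarrow> \<epsilon> < 1 \<Longrightarrow> 0 \<le> t \<Longrightarrow> \<bar>u \<epsilon> t x\<bar> \<le> M1"
    and v0_per: "\<And>\<epsilon> x. 0 < \<epsilon> \<Longrightarrow> \<epsilon> < 1 \<Longrightarrow> v0 \<epsilon> (x + 2 * pi) = v0 \<epsilon> x"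
    and v0_L1: "\<exists>C. \<forall>\<epsilon>. 0 < \<epsilon> \<and> \<epsilon> < 1 \<longrightarrow> integral {-pi..pi} (\<lambda>x. \<bar>v0 \<epsilon> x\<bar>) \<le> C"
    and X_init: "\<And>\<epsilon>. 0 < \<epsilon> \<Longrightarrow> \<epsilon> < 1 \<Longrightarrow> X \<epsilon> 0 = v0 \<epsilon>"
    and X_ode: "\<And>\<epsilon> t. 0 < \<epsilon> \<Longrightarrow> \<epsilon> < 1 \<Longrightarrow> 0 \<le> t \<Longrightarrow>
        \<exists>D. (X \<epsilon> has_vector_derivative D) (at t within {0..}) \<and>
            (\<forall>x. apply_bcontfun D x = upwind_rhs \<epsilon> (X \<epsilon> t) (u \<epsilon> t) x)"
    and X_C1: "\<And>\<epsilon>. 0 < \<epsilon> \<Longrightarrow> \<epsilon> < 1 \<Longrightarrow>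
        continuous_on {0..} (\<lambda>t. vector_derivative (X \<epsilon>) (at t within {0..}))"
    and phi_smooth: "smooth_real \<phi>"
    and phi_supp: "has_compact_support \<phi>"
    and phi_int: "(\<phi> has_integral 1) UNIV"
    and alpha: "0 < \<alpha>" "\<alpha> \<le> 1"
  shows "\<exists>M2>0. \<forall>\<epsilon> x t. 0 < \<epsilon> \<and> \<epsilon> < 1 \<and> 0 \<le> t \<longrightarrow>
           \<bar>conv (X \<epsilon> t) (mollifier \<phi> (\<epsilon> powr \<alpha>)) x\<bar> \<le> M2 / \<epsilon> powr \<alpha> \<and>
           \<bar>deriv (\<lambda>y. conv (X \<epsilon> t) (mollifier \<phi> (\<epsilon> powr \<alpha>)) y) x\<bar> \<le> M2 / \<epsilon> powr (2 * \<alpha>)"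
proof -
  obtain C where C: "\<forall>\<epsilon>. 0 < \<epsilon> \<and> \<epsilon> < 1 \<longrightarrow> integral {-pi..pi} (\<lambda>x. \<bar>v0 \<epsilon> x\<bar>) \<le> C"
    using v0_L1 by blast
  obtain R B where vanish: "\<And>s. R < \<bar>s\<bar> \<Longrightarrow> \<phi> s = 0"
    and der: "\<And>s. (\<phi> has_real_derivative deriv \<phi> s) (at s)" and cd: "continuous_on UNIV (deriv \<phi>)"
    and B: "\<And>s. \<bar>\<phi> s\<bar> \<le> B" "\<And>s. \<bar>deriv \<phi> s\<bar> \<le> B"
    using smooth_compact_support_bounds[OF phi_smooth phi_supp] by blast
  define N where "N = nat \<lceil>(R + 1)/pi\<rceil>"
  have N: "R + 1 \<le> pi * real N"
    using real_nat_ceiling_ge[of "(R + 1)/pi"] unfolding N_def by (simp add: field_simps)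
  define K where "K = B * (real N * max C 0)"
  have "0 \<le> K" unfolding K_def using B(1)[of 0] by simp
  show ?thesis
  proof (intro exI[of _ "K + 1"] conjI allI impI)
    fix \<epsilon> x t :: real assume "0 < \<epsilon> \<and> \<epsilon> < 1 \<and> 0 \<le> t"
    then have e: "0 < \<epsilon>" "\<epsilon> < 1" and t: "0 \<le> t" by auto
    interpret upwind_trajectory \<epsilon> M1 "X \<epsilon>" "u \<epsilon>"
      using e M1_pos u_bound u_per X_ode by unfold_locales auto
    have X_periodic: "X \<epsilon> s (y + 2*pi) = X \<epsilon> s y" if "0 \<le> s" for s y
      using periodicity_preserved[OF _ that] X_init v0_per e by simp
    have L1: "integral {-pi..pi} (\<lambda>y. \<bar>X \<epsilon> t y\<bar>) \<le> max C 0"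
      using L1_norm_nonincreasing[OF X_periodic t] C X_init e by force
    define \<delta> where "\<delta> = \<epsilon> powr \<alpha>"
    have \<delta>: "0 < \<delta>" "\<delta> \<le> 1" and \<delta>2: "\<epsilon> powr (2 * \<alpha>) = \<delta>^2"
      unfolding \<delta>_def using e alpha by (auto intro: powr_le1 simp: power2_eq_square powr_add[symmetric])
    note bounds = conv_mollifier_bounds[OF X_periodic[OF t] continuous_on_apply_bcontfun L1 \<delta> vanish der cd B N]
    show "\<bar>conv (X \<epsilon> t) (mollifier \<phi> (\<epsilon> powr \<alpha>)) x\<bar> \<le> (K + 1) / \<epsilon> powr \<alpha>"
      using bounds(1)[of x] divide_right_mono[of K "K + 1" \<delta>] \<delta> unfolding K_def \<delta>_def by simp
    show "\<bar>deriv (\<lambda>y. conv (X \<epsilon> t) (mollifier \<phi> (\<epsilon> powr \<alpha>)) y) x\<bar> \<le> (K + 1) / \<epsilon> powr (2 * \<alpha>)"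
      using bounds(2)[of x] divide_right_mono[of K "K + 1" "\<delta>^2"] \<delta> unfolding \<delta>2 K_def \<delta>_def by simp
  qed (use \<open>0 \<le> K\<close> in simp)
qed

end
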